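(* Let $n\in\mathbb{N}$, $n\geq 2$, let $l\in(0,\frac{2}{n})$ and let $\alpha$ satisfy $\frac{2}{n}\leq\alpha<1+\frac{1}{n}-\frac{l}{2}$. Let $\theta$ with $1<\theta<\frac{n}{n-2}$ and $\mu>\frac{n}{2}$ be such that $$\frac{l(2\mu-1)}{4\mu-n}<\frac{n(\theta+1-2\alpha\theta)+2\theta}{2n\theta+n^2-n^2\theta}.$$ Then there is $q_r\in[1,\infty)$ such that for all $q>q_r$, $$-\frac{2l\big(nq+\mu(4+n^2-2n(2+q))\big)}{n(4\mu-n)}<\frac{q\big(2n(\theta+1-2\alpha\theta)+4\theta\big)+2n\theta(\alpha-1)(n-2)}{2n\theta+n^2-n^2\theta}.$$
   Context: For $n=2$ the condition $1<\theta<\frac{n}{n-2}$ is understood as $\theta>1$. *)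

theory Defs
  imports "HOL-Analysis.Analysis"
begin

end

theory Submission
  imports Defs
begin

text \<open>Both sides of the claimed inequality are affine functions of \<open>q\<close>, and their slopes are
  twice the two sides of \<open>hcond\<close>. An affine function with the larger slope eventually
  dominates.\<close>

lemma affine_less_affine_eventually:
  fixes a b c d :: real
  assumes "a < b"
  shows "\<exists>q\<^sub>0\<ge>1. \<forall>q>q\<^sub>0. a * q + c < b * q + d"
proof (intro exI[of _ "max 1 ((c - d) / (b - a))"] conjI allI impI)
  fix q :: real
  assume "max 1 ((c - d) / (b - a)) < q"
  then have "c - d < q * (b - a)"
    using assms by (simp add: pos_divide_less_eq)
  then show "a * q + c < b * q + d"
    by (simp add: algebra_simps)
qed simp

lemma affine_form_lhs:
  fixes N K l \<mu> q :: real
  assumes "N \<noteq> 0"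
  shows "- (2 * l * (N * q + \<mu> * (4 + N\<^sup>2 - 2 * N * (2 + q)))) / (N * K)
    = 2 * (l * (2 * \<mu> - 1) / K) * q + (- 2 * l * \<mu> * (N - 2)\<^sup>2 / (N * K))"
proof (cases "K = 0")
  case False
  with assms show ?thesis
    by (simp add: field_simps power2_eq_square)
qed simp

lemma affine_form_rhs:
  fixes X E D q :: real
  shows "(q * (2 * X) + E) / D = 2 * (X / D) * q + E / D"
  by (simp add: add_divide_distrib)

theorem lemma4p5:
  fixes n :: nat and l \<alpha> \<theta> \<mu> :: real
  assumes hn: "n \<ge> 2"
    and hl: "0 < l" "l < 2 / real n"
    and ha: "2 / real n \<le> \<alpha>" "\<alpha> < 1 + 1 / real n - l / 2"
    and ht: "1 < \<theta>" "n = 2 \<or> \<theta> < real n / (real n - 2)"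
    and hmu: "\<mu> > real n / 2"
    and hcond: "l * (2 * \<mu> - 1) / (4 * \<mu> - real n)
       < (real n * (\<theta> + 1 - 2 * \<alpha> * \<theta>) + 2 * \<theta>)
         / (2 * real n * \<theta> + (real n)^2 - (real n)^2 * \<theta>)"
  shows "\<exists>q_r::real. 1 \<le> q_r \<and> (\<forall>q::real. q > q_r \<longrightarrow>
     - (2 * l * (real n * q + \<mu> * (4 + (real n)^2 - 2 * real n * (2 + q))))
        / (real n * (4 * \<mu> - real n))
     < (q * (2 * real n * (\<theta> + 1 - 2 * \<alpha> * \<theta>) + 4 * \<theta>)
          + 2 * real n * \<theta> * (\<alpha> - 1) * (real n - 2))
       / (2 * real n * \<theta> + (real n)^2 - (real n)^2 * \<theta>))"
proof -
  let ?K = "4 * \<mu> - real n" and ?D = "2 * real n * \<theta> + (real n)^2 - (real n)^2 * \<theta>"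
  let ?X = "real n * (\<theta> + 1 - 2 * \<alpha> * \<theta>) + 2 * \<theta>"
  let ?E = "2 * real n * \<theta> * (\<alpha> - 1) * (real n - 2)"
  obtain q\<^sub>0 where "1 \<le> q\<^sub>0" and q\<^sub>0: "\<forall>q>q\<^sub>0.
      2 * (l * (2 * \<mu> - 1) / ?K) * q + (- 2 * l * \<mu> * (real n - 2)\<^sup>2 / (real n * ?K))
    < 2 * (?X / ?D) * q + ?E / ?D"
    using affine_less_affine_eventually hcond by (metis mult_less_cancel_left_pos zero_less_numeral)
  have "real n \<noteq> 0"
    using hn by simp
  moreover have "q * (2 * real n * (\<theta> + 1 - 2 * \<alpha> * \<theta>) + 4 * \<theta>) = q * (2 * ?X)" for q
    by (simp add: algebra_simps)
  ultimately show ?thesis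
    using \<open>1 \<le> q\<^sub>0\<close> q\<^sub>0 affine_form_lhs affine_form_rhs by metis
qed

end
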